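(* Let $g=e^{-\psi}\colon\mathbb R^d\to[0,+\infty)$ satisfy the Basic Assumptions, let $m=\min\psi$, and assume $\psi(0)<m+1$. Then $\operatorname{supp}g$ is a star-like set with respect to $g$. Moreover, if $U\subset\mathbb R^d$ satisfies $\inf_{x\in U\cap\operatorname{supp}g}g(x)>0$, then the set $\{((u,g(u)),\bar v)\in\widetilde{\mathcal{CP}}(g,g):u\in U\}$ is bounded in $\mathbb R^{d+1}\times\mathbb R^{d+1}$.
   Context: $\operatorname{supp}g=\{x:g(x)>0\}$. Basic Assumptions: $g$ upper semi-continuous, log-concave, with finite positive integral, $\operatorname{supp}g$ bounded, origin in interior of $\operatorname{supp}g$. Lifting $\mathrm{lift}(f)=\{(x,y)\in\mathbb R^d\times\mathbb R:x\in\overline{\operatorname{supp}f},|y|\le f(x)\}$. Fréchet normal cone $N_A(a_0)=\{v:\forall\varepsilon>0\,\exists\delta>0:\langle v,a-a_0\rangle\le\varepsilon|a-a_0|\ \forall a\in A,|a-a_0|\le\delta\}$. Contact pairs $\mathcal{CP}(f,g)=\{(\bar u,\bar v):\bar u=(u,f(u)),u\in\overline{\operatorname{supp}f}\cap\overline{\operatorname{supp}g},f(u)=g(u),\bar v\in N_{\mathrm{lift}(f)}(\bar u)\cap N_{\mathrm{lift}(g)}(\bar u),\langle\bar v,\bar u\rangle=1\}$; reduced set $\widetilde{\mathcal{CP}}(f,g)$: those pairs with $f(u)\ne0$, or with $f(u)=g(u)=0$ and $\bar v=(v,0)$. Star-like: $U$ is star-like w.r.t. $g$ if for every $u\in U\cap\operatorname{supp}g$,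 $\langle(u,g(u)),\bar v\rangle>0$ for all nonzero $\bar v\in N_{\mathrm{lift}(g)}((u,g(u)))$. *)

theory Defs
  imports "HOL-Analysis.Analysis"
begin

text \<open>R^d is modelled by a Euclidean space 'a, R^(d+1) by 'a \<times> real.\<close>

definition supp :: "('a \<Rightarrow> real) \<Rightarrow> 'a set" where
  "supp g = {x. g x > 0}"

definition usc :: "('a::topological_space \<Rightarrow> real) \<Rightarrow> bool" where
  "usc g \<longleftrightarrow> (\<forall>a. open {x. g x < a})"

definition log_concave :: "('a::real_vector \<Rightarrow> real) \<Rightarrow> bool" where
  "log_concave g \<longleftrightarrow> (\<forall>x y t. 0 < t \<and> t < 1 \<longrightarrow>
      g ((1 - t) *\<^sub>R x + t *\<^sub>R y) \<ge> g x powr (1 - t) * g y powr t)"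

definition basic_assumptions :: "('a::euclidean_space \<Rightarrow> real) \<Rightarrow> bool" where
  "basic_assumptions g \<longleftrightarrow>
     (\<forall>x. g x \<ge> 0) \<and> usc g \<and> log_concave g \<and>
     g integrable_on UNIV \<and> integral UNIV g > 0 \<and>
     bounded (supp g) \<and> 0 \<in> interior (supp g)"

definition psi :: "('a \<Rightarrow> real) \<Rightarrow> 'a \<Rightarrow> ereal" where
  "psi g x = (if g x > 0 then ereal (- ln (g x)) else \<infinity>)"

definition lift :: "('a::topological_space \<Rightarrow> real) \<Rightarrow> ('a \<times> real) set" where
  "lift f = {(x, y). x \<in> closure (supp f) \<and> \<bar>y\<bar> \<le> f x}"

definition normal_cone :: "'b::real_inner set \<Rightarrow> 'b \<Rightarrow> 'b set" where
  "normal_cone A a0 = {v. \<forall>\<epsilon>>0. \<exists>\<delta>>0. \<forall>a\<in>A. norm (a - a0) \<le> \<delta> \<longrightarrow>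
        inner v (a - a0) \<le> \<epsilon> * norm (a - a0)}"

definition contact_pairs ::
  "('a::euclidean_space \<Rightarrow> real) \<Rightarrow> ('a \<Rightarrow> real) \<Rightarrow> (('a \<times> real) \<times> ('a \<times> real)) set" where
  "contact_pairs f g = {(ub, vb). \<exists>u. ub = (u, f u) \<and>
       u \<in> closure (supp f) \<inter> closure (supp g) \<and> f u = g u \<and>
       vb \<in> normal_cone (lift f) ub \<inter> normal_cone (lift g) ub \<and> inner vb ub = 1}"

definition reduced_contact_pairs ::
  "('a::euclidean_space \<Rightarrow> real) \<Rightarrow> ('a \<Rightarrow> real) \<Rightarrow> (('a \<times> real) \<times> ('a \<times> real)) set" where
  "reduced_contact_pairs f g = {(ub, vb) \<in> contact_pairs f g.
       f (fst ub) \<noteq> 0 \<or> (f (fst ub) = 0 \<and> g (fst ub) = 0 \<and> snd vb = 0)}"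

definition star_like :: "'a::euclidean_space set \<Rightarrow> ('a \<Rightarrow> real) \<Rightarrow> bool" where
  "star_like U g \<longleftrightarrow> (\<forall>u \<in> U \<inter> supp g. \<forall>vb \<in> normal_cone (lift g) (u, g u).
       vb \<noteq> 0 \<longrightarrow> inner (u, g u) vb > 0)"

end

theory Submission
  imports Defs
begin

text \<open>A normal (v, s) to lift g at (u, g u) is non-positive on every direction along which lift g
  contains a small segment from (u, g u). By log-concavity (w - u, g u (ln g w - ln g u)) is such a
  direction for every w in the support, so
  \<open>\<langle>v, w - u\<rangle> + s g u (ln g w - ln g u) \<le> 0\<close>.
  The hypothesis \<open>\<psi>(0) < min \<psi> + 1\<close> says that g is bounded by some M < e g(0), hence
  \<open>ln g u - ln g 0 < 1\<close>. Taking w = 0 gives \<open>\<langle>v, u\<rangle> + s g u > 0\<close> when s > 0 (when s = 0,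
  take w a small positive multiple of v), which is star-likeness; for a contact pair the left-hand
  side equals 1, which bounds s g u. Taking w = \<open>\<plusminus>\<rho> e\<^sub>i\<close>, points where g is bounded below,
  then bounds every coordinate of v.\<close>

lemma normal_cone_inner_nonpos:
  fixes v :: "'b::real_inner"
  assumes v: "v \<in> normal_cone A a0" and "t0 > 0"
    and segment: "\<And>t. 0 < t \<Longrightarrow> t \<le> t0 \<Longrightarrow> a0 + t *\<^sub>R d \<in> A"
  shows "inner v d \<le> 0"
proof (rule ccontr)
  assume "\<not> inner v d \<le> 0"
  then have pos: "inner v d > 0" by simp
  then have nd: "norm d > 0" by auto
  define e where "e = inner v d / (2 * norm d)"
  have "e > 0" using pos nd by (simp add: e_def)
  with v obtain \<delta> where "\<delta> > 0" and normal: "\<And>a. a \<in> A \<Longrightarrow> norm (a - a0) \<le> \<delta> \<Longrightarrow>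
      inner v (a - a0) \<le> e * norm (a - a0)"
    unfolding normal_cone_def by blast
  define t where "t = min t0 (\<delta> / norm d)"
  have t: "t > 0" "t \<le> t0" using \<open>t0 > 0\<close> \<open>\<delta> > 0\<close> nd by (auto simp: t_def)
  have "norm ((a0 + t *\<^sub>R d) - a0) \<le> \<delta>"
    using t nd by (simp add: t_def min_def field_simps split: if_splits)
  then have "inner v ((a0 + t *\<^sub>R d) - a0) \<le> e * norm ((a0 + t *\<^sub>R d) - a0)"
    using normal segment[OF t] by blast
  then have "t * inner v d \<le> t * (e * norm d)" using t by (simp add: mult.left_commute)
  then have "inner v d \<le> e * norm d" using t by simp
  also have "\<dots> = inner v d / 2" using nd by (simp add: e_def)
  finally show False using pos by simp
qed

lemma interior_supp_pos:
  assumes "x \<in> interior (supp g)"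
  shows "g x > 0"
  using assms interior_subset by (force simp: supp_def)

lemma lift_normal_cone_snd_nonneg:
  assumes "g u > 0" and "(v, s) \<in> normal_cone (lift g) (u, g u)"
  shows "s \<ge> 0"
proof -
  have "u \<in> closure (supp g)" using assms(1) closure_subset by (force simp: supp_def)
  then have "inner (v, s) (0, -1::real) \<le> 0"
    by (intro normal_cone_inner_nonpos[OF assms(2) assms(1)]) (auto simp: lift_def)
  then show ?thesis by simp
qed

lemma log_concave_convex_supp:
  assumes "log_concave g"
  shows "convex (supp g)"
proof (rule convexI)
  fix x y and a b :: real
  assume x: "x \<in> supp g" and y: "y \<in> supp g" and ab: "0 \<le> a" "0 \<le> b" "a + b = 1"
  show "a *\<^sub>R x + b *\<^sub>R y \<in> supp g"
  proof (cases "b = 0 \<or> b = 1")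
    case True
    then show ?thesis using x y ab by auto
  next
    case False
    then have "0 < b" "b < 1" and a: "a = 1 - b" using ab by auto
    then have "g x powr (1 - b) * g y powr b \<le> g (a *\<^sub>R x + b *\<^sub>R y)"
      using assms unfolding log_concave_def by blast
    moreover have "g x powr (1 - b) * g y powr b > 0" using x y by (simp add: supp_def)
    ultimately show ?thesis by (simp add: supp_def)
  qed
qed

lemma log_concave_lift_normal_cone:
  fixes g :: "'a::euclidean_space \<Rightarrow> real"
  assumes lc: "log_concave g" and gu: "g u > 0" and gw: "g w > 0"
    and vs: "(v, s) \<in> normal_cone (lift g) (u, g u)"
  shows "inner v (w - u) + s * g u * (ln (g w) - ln (g u)) \<le> 0"
proof -
  define L where "L = ln (g w) - ln (g u)"
  have "inner (v, s) (w - u, g u * L) \<le> 0"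
  proof (rule normal_cone_inner_nonpos[OF vs])
    show "1 / (\<bar>L\<bar> + 2) > 0" by simp
    fix t :: real assume t: "0 < t" "t \<le> 1 / (\<bar>L\<bar> + 2)"
    then have "t * \<bar>L\<bar> + 2 * t \<le> 1" by (simp add: pos_le_divide_eq distrib_left)
    moreover have "t * (- L) \<le> t * \<bar>L\<bar>" using t by (intro mult_left_mono) auto
    ultimately have t1: "t < 1" and tL: "0 \<le> 1 + t * L"
      using t by (smt (verit) mult_nonneg_nonneg abs_ge_zero mult_minus_right)+
    define x where "x = (1 - t) *\<^sub>R u + t *\<^sub>R w"
    have "g u * (1 + t * L) \<le> g u * exp (t * L)"
      using gu exp_ge_add_one_self[of "t * L"] by simp
    also have "\<dots> = exp (ln (g u) + t * L)" using gu by (simp add: exp_add)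
    also have "\<dots> = g u powr (1 - t) * g w powr t"
      using gu gw by (simp add: powr_def L_def algebra_simps flip: exp_add)
    also have "\<dots> \<le> g x"
      using lc t t1 unfolding log_concave_def x_def by blast
    finally have height: "g u * (1 + t * L) \<le> g x" .
    have "0 < g u powr (1 - t) * g w powr t" using gu gw by simp
    then have "g x > 0" using \<open>g u powr (1 - t) * g w powr t \<le> g x\<close> by linarith
    then have "x \<in> closure (supp g)" using closure_subset by (force simp: supp_def)
    moreover have "(u, g u) + t *\<^sub>R (w - u, g u * L) = (x, g u * (1 + t * L))"
      by (simp add: x_def algebra_simps)
    ultimately show "(u, g u) + t *\<^sub>R (w - u, g u * L) \<in> lift g"
      using height tL gu by (auto simp: lift_def)
  qed
  then show ?thesis by (simp add: L_def mult.assoc)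
qed

lemma log_concave_lift_normal_cone_zero:
  fixes g :: "'a::euclidean_space \<Rightarrow> real"
  assumes lc: "log_concave g" and nonneg: "\<forall>x. g x \<ge> 0"
    and u: "u \<in> closure (supp g)" and gu: "g u = 0" and w: "w \<in> supp g"
    and vs: "(v, s) \<in> normal_cone (lift g) (u, g u)"
  shows "inner v (w - u) \<le> 0"
proof -
  have convex: "convex (closure (supp g))" using log_concave_convex_supp[OF lc] by simp
  have wc: "w \<in> closure (supp g)" using w closure_subset by blast
  have "inner (v, s) (w - u, 0::real) \<le> 0"
  proof (rule normal_cone_inner_nonpos[OF vs zero_less_one])
    fix t :: real assume "0 < t" "t \<le> 1"
    then have "(1 - t) *\<^sub>R u + t *\<^sub>R w \<in> closure (supp g)"
      using convexD[OF convex u wc, of "1 - t" t] by simp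
    moreover have "(u, g u) + t *\<^sub>R (w - u, 0) = ((1 - t) *\<^sub>R u + t *\<^sub>R w, 0)"
      using gu by (simp add: algebra_simps)
    ultimately show "(u, g u) + t *\<^sub>R (w - u, 0) \<in> lift g"
      using nonneg by (auto simp: lift_def)
  qed
  then show ?thesis by simp
qed

lemma psi_gap_imp_bound:
  assumes gap: "psi g 0 < (INF x. psi g x) + 1" and g0: "g 0 > 0"
  obtains M where "\<And>x. g x \<le> M" and "M < exp 1 * g 0"
proof -
  have psi0: "psi g 0 = ereal (- ln (g 0))" using g0 by (simp add: psi_def)
  have INF_le: "(INF x. psi g x) \<le> psi g x" for x by (rule INF_lower) simp
  obtain m where m: "(INF x. psi g x) = ereal m"
  proof (cases "INF x. psi g x")
    case (real r)
    then show thesis using that by simp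
  next
    case PInf
    then show thesis using INF_le[of 0] psi0 by simp
  next
    case MInf
    then show thesis using gap by simp
  qed
  show thesis
  proof (rule that[of "exp (- m)"])
    fix x
    show "g x \<le> exp (- m)"
    proof (cases "g x > 0")
      case True
      then have "m \<le> - ln (g x)" using INF_le[of x] m by (simp add: psi_def)
      then have "exp (ln (g x)) \<le> exp (- m)" by simp
      then show ?thesis using True by simp
    next
      case False
      then show ?thesis using exp_gt_zero[of "- m"] by linarith
    qed
  next
    have "- ln (g 0) < m + 1" using gap psi0 m by simp
    then have "exp (- m) < exp (1 + ln (g 0))" by simp
    then show "exp (- m) < exp 1 * g 0" using g0 by (simp add: exp_add)
  qed
qed

lemma ln_lt_one_plus_ln:
  fixes x M y :: real
  assumes "0 < x" "x \<le> M" "M < exp 1 * y"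
  shows "ln x < 1 + ln y"
proof -
  have "0 < exp 1 * y" using assms by linarith
  then have "y > 0" by (simp add: zero_less_mult_iff)
  then have "ln x < ln (exp 1 * y)" using assms by simp
  then show ?thesis using \<open>y > 0\<close> by (simp add: ln_mult)
qed

lemma star_like_supp:
  fixes g :: "'a::euclidean_space \<Rightarrow> real"
  assumes lc: "log_concave g" and int0: "0 \<in> interior (supp g)"
    and M: "\<And>x. g x \<le> M" "M < exp 1 * g 0"
  shows "star_like (supp g) g"
  unfolding star_like_def
proof (intro ballI impI)
  fix u and vb :: "'a \<times> real"
  assume "u \<in> supp g \<inter> supp g" and vb: "vb \<in> normal_cone (lift g) (u, g u)" and "vb \<noteq> 0"
  obtain v s where vs: "vb = (v, s)" by (cases vb)
  have gu: "g u > 0" using \<open>u \<in> supp g \<inter> supp g\<close> by (simp add: supp_def)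
  have g0: "g 0 > 0" using interior_supp_pos[OF int0] .
  have s: "s \<ge> 0" using lift_normal_cone_snd_nonneg gu vb vs by blast
  show "inner (u, g u) vb > 0"
  proof (cases "s = 0")
    case False
    have "inner v (0 - u) + s * g u * (ln (g 0) - ln (g u)) \<le> 0"
      using log_concave_lift_normal_cone[OF lc gu g0] vb vs by simp
    moreover have "s * g u * (- 1) < s * g u * (ln (g 0) - ln (g u))"
      using ln_lt_one_plus_ln[OF gu M(1) M(2)] False s gu
      by (intro mult_strict_left_mono) auto
    ultimately show ?thesis using vs by (simp add: inner_commute algebra_simps)
  next
    case True
    then have "v \<noteq> 0" using \<open>vb \<noteq> 0\<close> vs by (auto simp: zero_prod_def)
    obtain r where r: "r > 0" "ball 0 r \<subseteq> supp g" using int0 mem_interior by blast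
    define w where "w = (r / 2 / norm v) *\<^sub>R v"
    have "norm w < r" using \<open>v \<noteq> 0\<close> r by (simp add: w_def)
    then have "g w > 0" using r by (auto simp: supp_def)
    then have "inner v (w - u) \<le> 0"
      using log_concave_lift_normal_cone[OF lc gu _ vb[unfolded vs]] True by simp
    moreover have "inner v w = r / 2 * norm v"
      by (simp add: w_def power2_norm_eq_inner[symmetric] power2_eq_square)
    moreover have "r / 2 * norm v > 0" using r \<open>v \<noteq> 0\<close> by simp
    ultimately show ?thesis using vs True by (simp add: inner_commute inner_diff_right)
  qed
qed

lemma reduced_contact_pairs_self_iff:
  "((u, y), (v, s)) \<in> reduced_contact_pairs g g \<longleftrightarrow>
     y = g u \<and> u \<in> closure (supp g) \<and> (v, s) \<in> normal_cone (lift g) (u, g u) \<and>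
     inner v u + s * g u = 1 \<and> (g u \<noteq> 0 \<or> s = 0)"
  by (auto simp: reduced_contact_pairs_def contact_pairs_def)

lemma reduced_contact_pair_snd_bound:
  fixes g :: "'a::euclidean_space \<Rightarrow> real"
  assumes lc: "log_concave g" and nonneg: "\<forall>x. g x \<ge> 0"
    and g0: "g 0 > 0" and M: "\<And>x. g x \<le> M"
    and pair: "((u, g u), (v, s)) \<in> reduced_contact_pairs g g"
  shows "0 \<le> s" and "s * g u * (1 + ln (g 0) - ln M) \<le> 1"
proof -
  from pair have vs: "(v, s) \<in> normal_cone (lift g) (u, g u)"
    and one: "inner v u + s * g u = 1" and alt: "g u \<noteq> 0 \<or> s = 0"
    by (simp_all add: reduced_contact_pairs_self_iff)
  have "0 \<le> s \<and> s * g u * (1 + ln (g 0) - ln M) \<le> 1"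
  proof (cases "g u > 0")
    case gu: True
    have s: "0 \<le> s" using lift_normal_cone_snd_nonneg[OF gu vs] .
    have "inner v (0 - u) + s * g u * (ln (g 0) - ln (g u)) \<le> 0"
      using log_concave_lift_normal_cone[OF lc gu g0 vs] .
    moreover have "s * g u * (ln (g 0) - ln M) \<le> s * g u * (ln (g 0) - ln (g u))"
      using s gu M[of u] by (intro mult_left_mono) auto
    ultimately show ?thesis using s one by (simp add: algebra_simps)
  next
    case False
    then show ?thesis using alt nonneg by (auto simp: order.strict_iff_order)
  qed
  then show "0 \<le> s" and "s * g u * (1 + ln (g 0) - ln M) \<le> 1" by auto
qed

lemma reduced_contact_pair_inner_bound:
  fixes g :: "'a::euclidean_space \<Rightarrow> real"
  assumes lc: "log_concave g" and nonneg: "\<forall>x. g x \<ge> 0"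
    and g0: "g 0 > 0" and M: "\<And>x. g x \<le> M" "M < exp 1 * g 0"
    and pair: "((u, g u), (v, s)) \<in> reduced_contact_pairs g g"
    and w: "w \<in> supp g" and \<beta>: "0 < \<beta>" "\<beta> \<le> g w"
  shows "inner v w \<le> 1 + max 0 (ln M - ln \<beta>) / (1 + ln (g 0) - ln M)"
proof -
  define \<alpha> where "\<alpha> = 1 + ln (g 0) - ln M"
  define D where "D = max 0 (ln M - ln \<beta>)"
  have "0 < M" using g0 M(1)[of 0] by linarith
  then have \<alpha>: "\<alpha> > 0" using ln_lt_one_plus_ln[OF _ order_refl M(2)] by (simp add: \<alpha>_def)
  from pair have uc: "u \<in> closure (supp g)" and vs: "(v, s) \<in> normal_cone (lift g) (u, g u)"
    and one: "inner v u + s * g u = 1" and alt: "g u \<noteq> 0 \<or> s = 0"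
    by (simp_all add: reduced_contact_pairs_self_iff)
  have "inner v w \<le> 1 + D / \<alpha>"
  proof (cases "g u > 0")
    case gu: True
    define P where "P = s * g u"
    have P: "0 \<le> P" "P * \<alpha> \<le> 1"
      using reduced_contact_pair_snd_bound[OF lc nonneg g0 M(1) pair] gu
      by (auto simp: P_def \<alpha>_def)
    have gw: "g w > 0" using w by (simp add: supp_def)
    have "inner v (w - u) + P * (ln (g w) - ln (g u)) \<le> 0"
      using log_concave_lift_normal_cone[OF lc gu gw vs] by (simp add: P_def)
    then have "inner v w \<le> 1 + P * (ln (g u) - ln (g w) - 1)"
      using one by (simp add: P_def inner_diff_right algebra_simps)
    moreover have "ln (g u) \<le> ln M" "ln \<beta> \<le> ln (g w)" using gu \<beta> M(1)[of u] by simp_all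
    then have "P * (ln (g u) - ln (g w) - 1) \<le> P * D"
      using P by (intro mult_left_mono) (auto simp: D_def)
    moreover have "P * \<alpha> * D \<le> D" using mult_right_mono[OF P(2), of D] by (simp add: D_def)
    then have "P * D \<le> D / \<alpha>" using \<alpha> by (simp add: field_simps)
    ultimately show ?thesis by simp
  next
    case False
    then have "g u = 0" "s = 0" using alt nonneg by (auto simp: order.strict_iff_order)
    then have "inner v (w - u) \<le> 0" "inner v u = 1"
      using log_concave_lift_normal_cone_zero[OF lc nonneg uc _ w vs] one by auto
    moreover have "0 \<le> D / \<alpha>" using \<alpha> by (simp add: D_def)
    ultimately show ?thesis by (simp add: inner_diff_right)
  qed
  then show ?thesis by (simp add: \<alpha>_def D_def)
qed

lemma norm_le_if_inner_le_on_cross: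
  fixes v :: "'a::euclidean_space"
  assumes "\<rho> > 0"
    and cross: "\<And>b. b \<in> Basis \<Longrightarrow> inner v (\<rho> *\<^sub>R b) \<le> K \<and> inner v (- (\<rho> *\<^sub>R b)) \<le> K"
  shows "norm v \<le> DIM('a) * (K / \<rho>)"
proof -
  have "\<bar>inner v b\<bar> \<le> K / \<rho>" if "b \<in> Basis" for b
  proof -
    have "\<rho> * inner v b \<le> K" "- (\<rho> * inner v b) \<le> K" using cross[OF that] by simp_all
    then have "\<rho> * \<bar>inner v b\<bar> \<le> K" using \<open>\<rho> > 0\<close> by (simp add: abs_if)
    then show ?thesis using \<open>\<rho> > 0\<close> by (simp add: field_simps)
  qed
  then have "(\<Sum>b\<in>Basis. \<bar>inner v b\<bar>) \<le> DIM('a) * (K / \<rho>)"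
    using sum_bounded_above[of Basis "\<lambda>b. \<bar>inner v b\<bar>" "K / \<rho>"] by simp
  then show ?thesis using norm_le_l1[of v] by linarith
qed

lemma bounded_reduced_contact_pairs:
  fixes g :: "'a::euclidean_space \<Rightarrow> real"
  assumes lc: "log_concave g" and nonneg: "\<forall>x. g x \<ge> 0"
    and bnd: "bounded (supp g)" and int0: "0 \<in> interior (supp g)"
    and M: "\<And>x. g x \<le> M" "M < exp 1 * g 0"
    and c: "c > 0" "\<And>x. x \<in> U \<inter> supp g \<Longrightarrow> c \<le> g x"
  shows "bounded {(ub, vb) \<in> reduced_contact_pairs g g. fst ub \<in> U}"
proof -
  have g0: "g 0 > 0" using interior_supp_pos[OF int0] .
  obtain r where r: "r > 0" "ball 0 r \<subseteq> supp g" using int0 mem_interior by blast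
  define \<rho> where "\<rho> = r / 2"
  have \<rho>: "\<rho> > 0" using r by (simp add: \<rho>_def)
  define F where "F = (\<lambda>b. \<rho> *\<^sub>R b) ` Basis \<union> (\<lambda>b. - (\<rho> *\<^sub>R b)) ` (Basis :: 'a set)"
  have F_supp: "F \<subseteq> supp g"
  proof
    fix w assume "w \<in> F"
    then have "norm w < r" using \<rho> by (auto simp: F_def \<rho>_def)
    then show "w \<in> supp g" using r by auto
  qed
  have "finite F" "F \<noteq> {}" by (auto simp: F_def)
  define \<beta> where "\<beta> = Min (g ` F)"
  have \<beta>_le: "\<beta> \<le> g w" if "w \<in> F" for w using \<open>finite F\<close> that by (simp add: \<beta>_def)
  have "\<beta> \<in> g ` F" using \<open>finite F\<close> \<open>F \<noteq> {}\<close> by (simp add: \<beta>_def)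
  then have \<beta>: "\<beta> > 0" using F_supp by (auto simp: supp_def)
  define \<alpha> where "\<alpha> = 1 + ln (g 0) - ln M"
  have "0 < M" using g0 M(1)[of 0] by linarith
  then have \<alpha>: "\<alpha> > 0" using ln_lt_one_plus_ln[OF _ order_refl M(2)] by (simp add: \<alpha>_def)
  define K where "K = 1 + max 0 (ln M - ln \<beta>) / \<alpha>"
  obtain B where B: "\<And>x. x \<in> closure (supp g) \<Longrightarrow> norm x \<le> B"
    using bounded_closure[OF bnd] unfolding bounded_iff by blast
  have "norm z \<le> B + M + (DIM('a) * (K / \<rho>) + 1 / (\<alpha> * c))"
    if "z \<in> {(ub, vb) \<in> reduced_contact_pairs g g. fst ub \<in> U}" for z
  proof -
    obtain u y v s where z: "z = ((u, y), (v, s))" by (metis prod.exhaust)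
    with that have "((u, y), (v, s)) \<in> reduced_contact_pairs g g" and "u \<in> U" by auto
    then have pair: "((u, g u), (v, s)) \<in> reduced_contact_pairs g g" and "y = g u"
      and uc: "u \<in> closure (supp g)" and alt: "g u \<noteq> 0 \<or> s = 0"
      by (simp_all add: reduced_contact_pairs_self_iff)
    have "norm (u, y) \<le> B + M"
      using norm_Pair_le[of u "g u"] B[OF uc] M(1)[of u] nonneg \<open>y = g u\<close> by simp
    moreover have "norm v \<le> DIM('a) * (K / \<rho>)"
    proof (rule norm_le_if_inner_le_on_cross[OF \<rho>])
      fix b :: 'a assume "b \<in> Basis"
      then have "\<rho> *\<^sub>R b \<in> F" "- (\<rho> *\<^sub>R b) \<in> F" by (auto simp: F_def)
      then show "inner v (\<rho> *\<^sub>R b) \<le> K \<and> inner v (- (\<rho> *\<^sub>R b)) \<le> K"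
        using reduced_contact_pair_inner_bound[OF lc nonneg g0 M pair] F_supp \<beta> \<beta>_le
        unfolding K_def \<alpha>_def by blast
    qed
    moreover have "\<bar>s\<bar> \<le> 1 / (\<alpha> * c)"
    proof (cases "s = 0")
      case False
      have s: "0 \<le> s" and s_\<alpha>: "s * g u * \<alpha> \<le> 1"
        using reduced_contact_pair_snd_bound[OF lc nonneg g0 M(1) pair] by (simp_all add: \<alpha>_def)
      from False have "u \<in> U \<inter> supp g" using alt nonneg \<open>u \<in> U\<close>
        by (auto simp: supp_def order.strict_iff_order)
      then have "s * c * \<alpha> \<le> s * g u * \<alpha>"
        using c(2) s \<alpha> by (intro mult_right_mono mult_left_mono) auto
      also note s_\<alpha>
      finally show ?thesis using s c(1) \<alpha> by (simp add: field_simps)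
    qed (use \<alpha> c(1) in simp)
    moreover have "norm z \<le> norm (u, y) + (norm v + norm s)"
      using norm_Pair_le[of "(u, y)" "(v, s)"] norm_Pair_le[of v s] by (simp add: z)
    ultimately show ?thesis by simp
  qed
  then show ?thesis unfolding bounded_iff by blast
qed

theorem mainTheorem16:
  fixes g :: "'a::euclidean_space \<Rightarrow> real"
  assumes "basic_assumptions g"
    and "psi g 0 < (INF x. psi g x) + 1"
  shows "star_like (supp g) g \<and>
    (\<forall>U::'a set. (\<exists>c>0. \<forall>x\<in>U \<inter> supp g. c \<le> g x) \<longrightarrow>
       bounded {(ub, vb) \<in> reduced_contact_pairs g g. fst ub \<in> U})"
proof -
  have nonneg: "\<forall>x. g x \<ge> 0" and lc: "log_concave g" and bnd: "bounded (supp g)"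
    and int0: "0 \<in> interior (supp g)"
    using assms(1) unfolding basic_assumptions_def by auto
  obtain M where M: "\<And>x. g x \<le> M" "M < exp 1 * g 0"
    using psi_gap_imp_bound[OF assms(2) interior_supp_pos[OF int0]] by blast
  show ?thesis
    using star_like_supp[OF lc int0 M] bounded_reduced_contact_pairs[OF lc nonneg bnd int0 M]
    by blast
qed

end
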